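(* Let $p\ge1$ be an integer, $x_1,\dots,x_p\in\mathbb{R}_{\ge0}$, $\epsilon\in(0,1]$, and $\delta>0$ with $\delta\le\frac{\max_{i\in[p]}x_i}{4\epsilon^{-1}\log(2p\epsilon^{-1})}$. Let $x'_1,\dots,x'_p\in\mathbb{R}_{\ge0}$ satisfy $x_i\le x'_i\le x_i+\delta$ for all $i\in[p]$. Then $\mathrm{TV}\big(\mathrm{softargmax}^\epsilon_{i\in[p]}x_i,\ \mathrm{softargmax}^\epsilon_{i\in[p]}x'_i\big)\le\frac{10\epsilon^{-1}\log(2p\epsilon^{-1})\delta}{\max_{i\in[p]}x_i}$.
   Context: Softmax: if $\max_i x_i=0$, $\mathrm{softargmax}^\epsilon_{i\in[p]}x_i$ is an arbitrary index $i$ with $x_i=0$. Otherwise, sample $\bm c$ uniformly from $\big[\frac{2\epsilon^{-1}\log(2p\epsilon^{-1})}{\max_i x_i},\frac{4\epsilon^{-1}\log(2p\epsilon^{-1})}{\max_i x_i}\big]$, then sample $\bm i^*\in[p]$ with $\Pr[\bm i^*=i\mid\bm c]=\exp(\bm c x_i)/\sum_{i'\in[p]}\exp(\bm c x_{i'})$, and set $\mathrm{softargmax}^\epsilon_{i\in[p]}x_i=\bm i^*$ (the same procedure applied to $x'_1,\dots,x'_p$ defines $\mathrm{softargmax}^\epsilon_{i\in[p]}x'_i$). $\log$ is natural. The total variation distance of random variables $\bm X,\bm X'$ is $\mathrm{TV}(\bm X,\bm X')=\inf_{\mathcal D}\Pr_{(X,X')\sim\mathcal D}[X\neq X']$ over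 couplings $\mathcal D$. *)

theory Defs
  imports "HOL-Probability.Probability"
begin

definition softmax_prob :: "nat \<Rightarrow> (nat \<Rightarrow> real) \<Rightarrow> real \<Rightarrow> nat \<Rightarrow> real" where
  "softmax_prob p x c i = exp (c * x i) / (\<Sum>j\<in>{1..p}. exp (c * x j))"

definition sam_lo :: "nat \<Rightarrow> real \<Rightarrow> (nat \<Rightarrow> real) \<Rightarrow> real" where
  "sam_lo p \<epsilon> x = 2 * inverse \<epsilon> * ln (2 * real p * inverse \<epsilon>) / Max (x ` {1..p})"

text \<open>softargmax: if max = 0, some index with x_i = 0 (a fixed choice);
  otherwise c uniform on [sam_lo, 2 sam_lo] and then i with probability softmax_prob;
  the law of i is the mixture written out below.\<close>
definition softargmax :: "nat \<Rightarrow> real \<Rightarrow> (nat \<Rightarrow> real) \<Rightarrow> nat pmf" where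
  "softargmax p \<epsilon> x =
     (if Max (x ` {1..p}) = 0 then return_pmf (LEAST i. i \<in> {1..p} \<and> x i = 0)
      else embed_pmf (\<lambda>i. if i \<in> {1..p} then
          (1 / (2 * sam_lo p \<epsilon> x - sam_lo p \<epsilon> x)) *
            integral {sam_lo p \<epsilon> x .. 2 * sam_lo p \<epsilon> x} (\<lambda>c. softmax_prob p x c i)
        else 0))"

definition TV :: "'a pmf \<Rightarrow> 'a pmf \<Rightarrow> real" where
  "TV P Q = Inf {measure_pmf.prob D {z. fst z \<noteq> snd z} | D.
                  map_pmf fst D = P \<and> map_pmf snd D = Q}"

end

theory Submission
  imports Defs
begin

text \<open>A maximal coupling gives TV(P, Q) \<le> 1 - (\<Sum>i. min (P i) (Q i)). Let M, M' be the maxima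
  of x, x', let L = log (2p/\<epsilon>)/\<epsilon>, and let a = 2L/M, a' = 2L/M' be the lower ends of the two
  temperature ranges. Since M \<le> M' \<le> M + \<delta> \<le> 2M we have a' \<le> a \<le> 2a', so both ranges [a, 2a]
  and [a', 2a'] contain [a, 2a']. At inverse temperature c, raising all scores by at most \<delta>
  shrinks each softmax probability by a factor at least exp (-c\<delta>) \<ge> 1 - 2a\<delta>, so both laws give
  index i at least (1 - 2a\<delta>)/a times the integral of its softmax probability over [a, 2a'].
  Summing over i, the overlap is at least (1 - 2a\<delta>)(2a'/a - 1) = (1 - 4L\<delta>/M)(2M/M' - 1), which
  is at least 1 - 10L\<delta>/M.\<close>

lemma pmf_embed_pmf_finite:
  fixes f :: "'a \<Rightarrow> real"
  assumes "finite S" "\<And>x. f x \<ge> 0" "\<And>x. x \<notin> S \<Longrightarrow> f x = 0" "sum f S = 1"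
  shows "pmf (embed_pmf f) = f"
proof
  fix y
  have "(\<integral>\<^sup>+x. ennreal (f x) \<partial>count_space UNIV) = (\<Sum>x\<in>S. ennreal (f x))"
    by (rule nn_integral_count_space') (use assms in auto)
  also have "\<dots> = 1" using assms by (simp add: sum_ennreal)
  finally show "pmf (embed_pmf f) y = f y" using pmf_embed_pmf[of f] assms by blast
qed

lemma measure_pmf_finite_support:
  assumes "finite S" "set_pmf D \<subseteq> S"
  shows "measure_pmf.prob D A = sum (pmf D) (A \<inter> S)"
  by (metis assms inf.absorb_iff2 inf_assoc measure_Int_set_pmf measure_measure_pmf_finite finite_Int)

lemma pmf_map_fst_finite_support:
  assumes "finite T" "set_pmf D \<subseteq> S \<times> T"
  shows "pmf (map_pmf fst D) i = (\<Sum>j\<in>T. pmf D (i, j))"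
proof -
  have "measure_pmf.prob D (fst -` {i}) = measure_pmf.prob D (Pair i ` T)"
    using assms(2) by (intro measure_pmf.finite_measure_eq_AE) (auto simp: AE_measure_pmf_iff)
  also have "\<dots> = (\<Sum>j\<in>T. pmf D (i, j))"
    using assms(1) by (simp add: measure_measure_pmf_finite sum.reindex inj_on_def)
  finally show ?thesis by (simp add: pmf_map)
qed

lemma pmf_map_snd_finite_support:
  assumes "finite S" "set_pmf D \<subseteq> S \<times> T"
  shows "pmf (map_pmf snd D) j = (\<Sum>i\<in>S. pmf D (i, j))"
proof -
  have swap: "set_pmf (map_pmf prod.swap D) \<subseteq> T \<times> S" using assms(2) by auto
  have "map_pmf snd D = map_pmf fst (map_pmf prod.swap D)" by (simp add: pmf.map_comp comp_def)
  then have "pmf (map_pmf snd D) j = (\<Sum>i\<in>S. pmf (map_pmf prod.swap D) (j, i))"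
    using pmf_map_fst_finite_support[OF assms(1) swap] by simp
  also have "\<dots> = (\<Sum>i\<in>S. pmf D (i, j))"
    using pmf_map_inj'[of prod.swap D] by (metis swap_simp inj_swap)
  finally show ?thesis .
qed

lemma TV_le_off_diagonal_weight:
  fixes w :: "'a \<times> 'a \<Rightarrow> real"
  assumes S: "finite S" and nonneg: "\<And>z. w z \<ge> 0" and supp: "\<And>z. z \<notin> S \<times> S \<Longrightarrow> w z = 0"
    and rows: "\<And>i. (\<Sum>j\<in>S. w (i, j)) = pmf P i"
    and cols: "\<And>j. (\<Sum>i\<in>S. w (i, j)) = pmf Q j"
  shows "TV P Q \<le> sum w {(i, j) \<in> S \<times> S. i \<noteq> j}"
proof -
  have "set_pmf P \<subseteq> S"
  proof
    fix i assume "i \<in> set_pmf P"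
    moreover have "pmf P i = 0" if "i \<notin> S" using rows[of i] supp that by simp
    ultimately show "i \<in> S" by (auto simp: set_pmf_iff)
  qed
  then have total: "sum w (S \<times> S) = 1"
    using sum_pmf_eq_1[OF S] sum.cartesian_product[of "\<lambda>i j. w (i, j)" S S] by (simp add: rows)
  define D where "D = embed_pmf w"
  have pmf_D: "pmf D = w"
    unfolding D_def by (rule pmf_embed_pmf_finite) (use S nonneg supp total in auto)
  have set_D: "set_pmf D \<subseteq> S \<times> S"
  proof
    fix z assume "z \<in> set_pmf D"
    then have "w z \<noteq> 0" by (simp add: set_pmf_iff pmf_D)
    then show "z \<in> S \<times> S" using supp by blast
  qed
  have "map_pmf fst D = P"
    by (rule pmf_eqI) (simp add: pmf_map_fst_finite_support[OF S set_D] pmf_D rows)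
  moreover have "map_pmf snd D = Q"
    by (rule pmf_eqI) (simp add: pmf_map_snd_finite_support[OF S set_D] pmf_D cols)
  ultimately have "TV P Q \<le> measure_pmf.prob D {z. fst z \<noteq> snd z}"
    unfolding TV_def by (intro cInf_lower) (auto intro!: bdd_belowI[where m = 0])
  also have "\<dots> = sum w ({z. fst z \<noteq> snd z} \<inter> S \<times> S)"
    using measure_pmf_finite_support[OF _ set_D] S by (simp add: pmf_D)
  also have "{z. fst z \<noteq> snd z} \<inter> S \<times> S = {(i, j) \<in> S \<times> S. i \<noteq> j}" by auto
  finally show ?thesis .
qed

definition overlap :: "'a pmf \<Rightarrow> 'a pmf \<Rightarrow> 'a \<Rightarrow> real" where
  "overlap P Q i = min (pmf P i) (pmf Q i)"

text \<open>The residual masses are coupled independently. If the overlap has total mass 1 the residuals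
  vanish, so the division by 0 is harmless.\<close>
definition maximal_coupling_weight :: "'a set \<Rightarrow> 'a pmf \<Rightarrow> 'a pmf \<Rightarrow> 'a \<times> 'a \<Rightarrow> real" where
  "maximal_coupling_weight S P Q = (\<lambda>(i, j).
     (if i = j then overlap P Q i else 0) +
     (pmf P i - overlap P Q i) * (pmf Q j - overlap P Q j) / (1 - sum (overlap P Q) S))"

lemma overlap_commute: "overlap P Q = overlap Q P"
  by (auto simp: overlap_def)

lemma maximal_coupling_weight_swap:
  "maximal_coupling_weight S Q P (j, i) = maximal_coupling_weight S P Q (i, j)"
  by (simp add: maximal_coupling_weight_def overlap_commute)

lemma sum_residual_eq:
  assumes "finite S" "set_pmf P \<subseteq> S"
  shows "(\<Sum>i\<in>S. pmf P i - overlap P Q i) = 1 - sum (overlap P Q) S"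
  using sum_pmf_eq_1[OF assms] by (simp add: sum_subtractf)

lemma overlap_outside:
  assumes "set_pmf P \<subseteq> S" "i \<notin> S"
  shows "pmf P i = 0" "overlap P Q i = 0"
proof -
  show "pmf P i = 0" using assms by (meson set_pmf_iff subsetD)
  then show "overlap P Q i = 0" by (simp add: overlap_def)
qed

lemma pmf_eq_overlap_if_full_overlap:
  assumes S: "finite S" and P: "set_pmf P \<subseteq> S" and full: "sum (overlap P Q) S = 1"
  shows "pmf P i = overlap P Q i"
proof (cases "i \<in> S")
  case True
  have "(\<Sum>i\<in>S. pmf P i - overlap P Q i) = 0" using sum_residual_eq[OF S P] full by simp
  moreover have "\<forall>i\<in>S. pmf P i - overlap P Q i \<ge> 0" by (simp add: overlap_def)
  ultimately show ?thesis
    using sum_nonneg_eq_0_iff[OF S, of "\<lambda>i. pmf P i - overlap P Q i"] True by simp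
qed (use overlap_outside[OF P] in simp)

lemma maximal_coupling_weight_row_sum:
  assumes S: "finite S" and P: "set_pmf P \<subseteq> S" and Q: "set_pmf Q \<subseteq> S"
  shows "(\<Sum>j\<in>S. maximal_coupling_weight S P Q (i, j)) = pmf P i"
proof -
  define \<mu> where "\<mu> = sum (overlap P Q) S"
  have "(\<Sum>j\<in>S. pmf Q j - overlap P Q j) = 1 - \<mu>"
    using sum_residual_eq[OF S Q, of P] by (simp add: overlap_commute \<mu>_def)
  then have "(\<Sum>j\<in>S. maximal_coupling_weight S P Q (i, j))
      = (if i \<in> S then overlap P Q i else 0) + (pmf P i - overlap P Q i) * (1 - \<mu>) / (1 - \<mu>)"
    using S by (simp add: maximal_coupling_weight_def sum.distrib sum_distrib_left[symmetric]
        sum_divide_distrib[symmetric] \<mu>_def)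
  also have "\<dots> = pmf P i"
    using pmf_eq_overlap_if_full_overlap[OF S P] overlap_outside[OF P]
    by (cases "\<mu> = 1") (auto simp: \<mu>_def)
  finally show ?thesis .
qed

lemma sum_overlap_le_1:
  assumes "finite S"
  shows "sum (overlap P Q) S \<le> 1"
proof -
  have "sum (overlap P Q) S \<le> sum (pmf P) S" by (rule sum_mono) (simp add: overlap_def)
  also have "\<dots> = measure_pmf.prob P S" by (simp add: measure_measure_pmf_finite assms)
  finally show ?thesis using measure_pmf.prob_le_1[of P S] by linarith
qed

lemma maximal_coupling_weight_nonneg:
  assumes "finite S"
  shows "maximal_coupling_weight S P Q z \<ge> 0"
proof -
  have "1 - sum (overlap P Q) S \<ge> 0" using sum_overlap_le_1[OF assms] by simp
  moreover have "overlap P Q i \<ge> 0" "pmf P i - overlap P Q i \<ge> 0" "pmf Q i - overlap P Q i \<ge> 0" for i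
    by (auto simp: overlap_def)
  ultimately show ?thesis
    by (auto simp: maximal_coupling_weight_def split: prod.split
        intro!: add_nonneg_nonneg divide_nonneg_nonneg mult_nonneg_nonneg)
qed

lemma maximal_coupling_weight_outside:
  assumes P: "set_pmf P \<subseteq> S" and Q: "set_pmf Q \<subseteq> S" and z: "z \<notin> S \<times> S"
  shows "maximal_coupling_weight S P Q z = 0"
proof -
  obtain i j where ij: "z = (i, j)" by fastforce
  then consider "i \<notin> S" | "j \<notin> S" using z by blast
  then show ?thesis
  proof cases
    case 1
    then show ?thesis using overlap_outside[OF P 1] ij by (auto simp: maximal_coupling_weight_def)
  next
    case 2
    have "pmf Q j = 0" "overlap P Q j = 0"
      using overlap_outside(1)[OF Q 2] overlap_outside(2)[OF Q 2, of P]
      by (simp_all add: overlap_commute)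
    then show ?thesis using ij by (auto simp: maximal_coupling_weight_def)
  qed
qed

lemma maximal_coupling_weight_off_diagonal:
  assumes S: "finite S" and P: "set_pmf P \<subseteq> S" and Q: "set_pmf Q \<subseteq> S"
  shows "sum (maximal_coupling_weight S P Q) {(i, j) \<in> S \<times> S. i \<noteq> j}
           \<le> 1 - sum (overlap P Q) S"
proof -
  define \<mu> where "\<mu> = sum (overlap P Q) S"
  define g where "g = (\<lambda>(i, j). (pmf P i - overlap P Q i) * (pmf Q j - overlap P Q j) / (1 - \<mu>))"
  have "sum (maximal_coupling_weight S P Q) {(i, j) \<in> S \<times> S. i \<noteq> j}
      = sum g {(i, j) \<in> S \<times> S. i \<noteq> j}"
    by (rule sum.cong) (auto simp: maximal_coupling_weight_def g_def \<mu>_def)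
  also have "\<dots> \<le> sum g (S \<times> S)"
    using S sum_overlap_le_1[OF S, of P Q]
    by (intro sum_mono2)
      (auto simp: g_def \<mu>_def overlap_def intro!: divide_nonneg_nonneg mult_nonneg_nonneg)
  also have "\<dots> = (\<Sum>i\<in>S. pmf P i - overlap P Q i) * (\<Sum>j\<in>S. pmf Q j - overlap P Q j) / (1 - \<mu>)"
    by (simp add: g_def sum_product sum_divide_distrib sum.cartesian_product case_prod_unfold)
  also have "\<dots> = 1 - \<mu>"
    using sum_residual_eq[OF S P, of Q] sum_residual_eq[OF S Q, of P]
    by (simp add: overlap_commute \<mu>_def)
  finally show ?thesis by (simp add: \<mu>_def)
qed

theorem TV_le_one_minus_overlap:
  assumes S: "finite S" and P: "set_pmf P \<subseteq> S" and Q: "set_pmf Q \<subseteq> S"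
  shows "TV P Q \<le> 1 - sum (overlap P Q) S"
proof -
  have "TV P Q \<le> sum (maximal_coupling_weight S P Q) {(i, j) \<in> S \<times> S. i \<noteq> j}"
  proof (rule TV_le_off_diagonal_weight[OF S])
    show "maximal_coupling_weight S P Q z \<ge> 0" for z by (rule maximal_coupling_weight_nonneg[OF S])
    show "z \<notin> S \<times> S \<Longrightarrow> maximal_coupling_weight S P Q z = 0" for z
      by (rule maximal_coupling_weight_outside[OF P Q])
    show "(\<Sum>j\<in>S. maximal_coupling_weight S P Q (i, j)) = pmf P i" for i
      by (rule maximal_coupling_weight_row_sum[OF S P Q])
    show "(\<Sum>i\<in>S. maximal_coupling_weight S P Q (i, j)) = pmf Q j" for j
      using maximal_coupling_weight_row_sum[OF S Q P] by (simp add: maximal_coupling_weight_swap)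
  qed
  also have "\<dots> \<le> 1 - sum (overlap P Q) S" by (rule maximal_coupling_weight_off_diagonal[OF S P Q])
  finally show ?thesis .
qed

lemma sum_exp_pos:
  fixes x :: "nat \<Rightarrow> real"
  shows "p \<ge> 1 \<Longrightarrow> (\<Sum>j\<in>{1..p}. exp (c * x j)) > 0"
  using sum_pos[of "{1..p}" "\<lambda>j. exp (c * x j)"] by auto

lemma softmax_prob_nonneg: "softmax_prob p x c i \<ge> 0"
  unfolding softmax_prob_def by (intro divide_nonneg_nonneg sum_nonneg) auto

lemma sum_softmax_prob: "p \<ge> 1 \<Longrightarrow> (\<Sum>i\<in>{1..p}. softmax_prob p x c i) = 1"
  using sum_exp_pos[of p c x] by (simp add: softmax_prob_def sum_divide_distrib[symmetric])

lemma softmax_prob_integrable: "p \<ge> 1 \<Longrightarrow> (\<lambda>c. softmax_prob p x c i) integrable_on {a..b}"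
  unfolding softmax_prob_def
  by (intro integrable_continuous_interval continuous_intros) (metis sum_exp_pos less_irrefl)

lemma softmax_prob_shift:
  assumes p: "p \<ge> 1" and c: "c \<ge> 0" and i: "i \<in> {1..p}"
    and shift: "\<forall>j\<in>{1..p}. x j \<le> x' j \<and> x' j \<le> x j + \<delta>"
  shows "(1 - c * \<delta>) * softmax_prob p x c i \<le> softmax_prob p x' c i"
proof -
  define Z where "Z = (\<Sum>j\<in>{1..p}. exp (c * x j))"
  define Z' where "Z' = (\<Sum>j\<in>{1..p}. exp (c * x' j))"
  have "Z' \<le> (\<Sum>j\<in>{1..p}. exp (c * \<delta>) * exp (c * x j))"
    unfolding Z'_def
  proof (rule sum_mono)
    fix j assume "j \<in> {1..p}"
    then have "x' j \<le> x j + \<delta>" using shift by blast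
    then have "c * x' j \<le> c * \<delta> + c * x j" using c by (metis add.commute distrib_left mult_left_mono)
    then show "exp (c * x' j) \<le> exp (c * \<delta>) * exp (c * x j)" by (simp flip: exp_add)
  qed
  then have Z': "Z' \<le> exp (c * \<delta>) * Z" by (simp add: Z_def sum_distrib_left)
  have "exp (- (c * \<delta>)) * softmax_prob p x c i = exp (c * x i) / (exp (c * \<delta>) * Z)"
    by (simp add: softmax_prob_def Z_def exp_minus field_simps)
  also have "\<dots> \<le> exp (c * x' i) / Z'"
    using Z' shift i c sum_exp_pos[OF p] by (intro frac_le) (auto simp: Z_def Z'_def mult_left_mono)
  also have "\<dots> = softmax_prob p x' c i" by (simp add: softmax_prob_def Z'_def)
  finally have "exp (- (c * \<delta>)) * softmax_prob p x c i \<le> softmax_prob p x' c i" .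
  moreover have "(1 - c * \<delta>) * softmax_prob p x c i \<le> exp (- (c * \<delta>)) * softmax_prob p x c i"
    using exp_ge_add_one_self[of "- (c * \<delta>)"] softmax_prob_nonneg by (intro mult_right_mono) auto
  ultimately show ?thesis by linarith
qed

lemma integral_softmax_prob_nonneg: "p \<ge> 1 \<Longrightarrow> integral {a..b} (\<lambda>c. softmax_prob p x c i) \<ge> 0"
  by (intro integral_nonneg softmax_prob_integrable softmax_prob_nonneg)

lemma integral_softmax_prob_mono:
  assumes "p \<ge> 1" "a' \<le> a" "b \<le> b'"
  shows "integral {a..b} (\<lambda>c. softmax_prob p x c i) \<le> integral {a'..b'} (\<lambda>c. softmax_prob p x c i)"
  using assms by (intro integral_subset_le softmax_prob_integrable softmax_prob_nonneg ballI) auto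

lemma integral_sum_softmax_prob:
  assumes "p \<ge> 1" "a \<le> b"
  shows "(\<Sum>i\<in>{1..p}. integral {a..b} (\<lambda>c. softmax_prob p x c i)) = b - a"
proof -
  have "(\<Sum>i\<in>{1..p}. integral {a..b} (\<lambda>c. softmax_prob p x c i))
      = integral {a..b} (\<lambda>c. \<Sum>i\<in>{1..p}. softmax_prob p x c i)"
    using assms(1) by (simp add: integral_sum softmax_prob_integrable)
  also have "\<dots> = b - a" using assms sum_softmax_prob[OF assms(1)] by simp
  finally show ?thesis .
qed

lemma integral_softmax_prob_shift:
  assumes p: "p \<ge> 1" and a: "0 \<le> a" and i: "i \<in> {1..p}" and \<delta>: "\<delta> \<ge> 0"
    and shift: "\<forall>j\<in>{1..p}. x j \<le> x' j \<and> x' j \<le> x j + \<delta>"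
  shows "(1 - b * \<delta>) * integral {a..b} (\<lambda>c. softmax_prob p x c i)
           \<le> integral {a..b} (\<lambda>c. softmax_prob p x' c i)"
proof -
  have "(1 - b * \<delta>) * integral {a..b} (\<lambda>c. softmax_prob p x c i)
      = integral {a..b} (\<lambda>c. (1 - b * \<delta>) * softmax_prob p x c i)"
    by simp
  also have "\<dots> \<le> integral {a..b} (\<lambda>c. softmax_prob p x' c i)"
  proof (rule integral_le)
    fix c assume c: "c \<in> {a..b}"
    then have "(1 - b * \<delta>) * softmax_prob p x c i \<le> (1 - c * \<delta>) * softmax_prob p x c i"
      using \<delta> by (intro mult_right_mono softmax_prob_nonneg) (auto intro: mult_right_mono)
    also have "\<dots> \<le> softmax_prob p x' c i" using c a by (intro softmax_prob_shift[OF p _ i shift]) auto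
    finally show "(1 - b * \<delta>) * softmax_prob p x c i \<le> softmax_prob p x' c i" .
  qed (intro integrable_on_mult_right softmax_prob_integrable p)+
  finally show ?thesis .
qed

lemma pmf_softargmax:
  assumes p: "p \<ge> 1" and M: "Max (x ` {1..p}) \<noteq> 0" and a: "sam_lo p \<epsilon> x > 0"
  shows "pmf (softargmax p \<epsilon> x) i = (if i \<in> {1..p} then
     integral {sam_lo p \<epsilon> x..2 * sam_lo p \<epsilon> x} (\<lambda>c. softmax_prob p x c i) / sam_lo p \<epsilon> x else 0)"
proof -
  define a where "a = sam_lo p \<epsilon> x"
  define f where "f i = (if i \<in> {1..p} then
      (1 / (2 * a - a)) * integral {a..2 * a} (\<lambda>c. softmax_prob p x c i) else 0)" for i
  have "softargmax p \<epsilon> x = embed_pmf f" using M unfolding softargmax_def f_def a_def by simp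
  moreover have "pmf (embed_pmf f) = f"
  proof (rule pmf_embed_pmf_finite)
    show "f j \<ge> 0" for j using a p by (simp add: f_def a_def integral_softmax_prob_nonneg)
    show "f j = 0" if "j \<notin> {1..p}" for j using that by (auto simp: f_def)
    show "sum f {1..p} = 1"
      using a integral_sum_softmax_prob[OF p, of a "2 * a" x]
      by (simp add: f_def a_def sum_divide_distrib[symmetric])
  qed simp
  ultimately show ?thesis by (simp add: f_def a_def)
qed

lemma softargmax_overlap_ge:
  fixes p :: nat and \<epsilon> :: real and x x' :: "nat \<Rightarrow> real"
  defines "a \<equiv> sam_lo p \<epsilon> x" and "a' \<equiv> sam_lo p \<epsilon> x'"
  assumes p: "p \<ge> 1" and i: "i \<in> {1..p}" and \<delta>: "\<delta> \<ge> 0"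
    and shift: "\<forall>j\<in>{1..p}. x j \<le> x' j \<and> x' j \<le> x j + \<delta>"
    and M: "Max (x ` {1..p}) \<noteq> 0" and M': "Max (x' ` {1..p}) \<noteq> 0"
    and a: "0 < a'" "a' \<le> a" "a \<le> 2 * a'" and small: "2 * a * \<delta> \<le> 1"
  shows "(1 - 2 * a * \<delta>) * integral {a..2 * a'} (\<lambda>c. softmax_prob p x c i) / a
           \<le> overlap (softargmax p \<epsilon> x) (softargmax p \<epsilon> x') i"
proof -
  define J where "J = integral {a..2 * a'} (\<lambda>c. softmax_prob p x c i)"
  have J: "J \<ge> 0" using p by (simp add: J_def integral_softmax_prob_nonneg)
  have "0 \<le> 2 * a * \<delta> * J" using J \<delta> a by simp
  then have "(1 - 2 * a * \<delta>) * J / a \<le> J / a"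
    using a by (intro divide_right_mono) (auto simp: algebra_simps)
  also have "\<dots> \<le> integral {a..2 * a} (\<lambda>c. softmax_prob p x c i) / a"
    unfolding J_def using p a by (intro divide_right_mono integral_softmax_prob_mono) auto
  also have "\<dots> = pmf (softargmax p \<epsilon> x) i" using pmf_softargmax[OF p M] a i by (simp add: a_def)
  finally have P: "(1 - 2 * a * \<delta>) * J / a \<le> pmf (softargmax p \<epsilon> x) i" .
  have "(1 - 2 * a * \<delta>) * J \<le> (1 - 2 * a' * \<delta>) * J"
    using J \<delta> a by (intro mult_right_mono) (auto simp: mult_right_mono)
  also have "\<dots> \<le> integral {a..2 * a'} (\<lambda>c. softmax_prob p x' c i)"
    unfolding J_def using a by (intro integral_softmax_prob_shift[OF p _ i \<delta> shift]) auto
  also have "\<dots> \<le> integral {a'..2 * a'} (\<lambda>c. softmax_prob p x' c i)"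
    using p a by (intro integral_softmax_prob_mono) auto
  finally have "(1 - 2 * a * \<delta>) * J \<le> integral {a'..2 * a'} (\<lambda>c. softmax_prob p x' c i)" .
  moreover have "(1 - 2 * a * \<delta>) * J / a \<le> (1 - 2 * a * \<delta>) * J / a'"
    using a J small by (intro divide_left_mono) auto
  ultimately have
    "(1 - 2 * a * \<delta>) * J / a \<le> integral {a'..2 * a'} (\<lambda>c. softmax_prob p x' c i) / a'"
    using a by (meson divide_right_mono less_imp_le order_trans)
  also have "\<dots> = pmf (softargmax p \<epsilon> x') i" using pmf_softargmax[OF p M'] a i by (simp add: a'_def)
  finally show ?thesis using P by (simp add: overlap_def J_def)
qed

lemma TV_softargmax_le_temperatures:
  fixes p :: nat and \<epsilon> :: real and x x' :: "nat \<Rightarrow> real"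
  defines "a \<equiv> sam_lo p \<epsilon> x" and "a' \<equiv> sam_lo p \<epsilon> x'"
  assumes p: "p \<ge> 1" and \<delta>: "\<delta> \<ge> 0"
    and shift: "\<forall>j\<in>{1..p}. x j \<le> x' j \<and> x' j \<le> x j + \<delta>"
    and M: "Max (x ` {1..p}) \<noteq> 0" and M': "Max (x' ` {1..p}) \<noteq> 0"
    and a: "0 < a'" "a' \<le> a" "a \<le> 2 * a'" and small: "2 * a * \<delta> \<le> 1"
  shows "TV (softargmax p \<epsilon> x) (softargmax p \<epsilon> x') \<le> 1 - (1 - 2 * a * \<delta>) * (2 * a' - a) / a"
proof -
  have supp: "set_pmf (softargmax p \<epsilon> y) \<subseteq> {1..p}"
    if "Max (y ` {1..p}) \<noteq> 0" "sam_lo p \<epsilon> y > 0" for y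
    using pmf_softargmax[OF p that] by (auto simp: set_pmf_iff split: if_splits)
  have "TV (softargmax p \<epsilon> x) (softargmax p \<epsilon> x')
      \<le> 1 - sum (overlap (softargmax p \<epsilon> x) (softargmax p \<epsilon> x')) {1..p}"
    using a by (intro TV_le_one_minus_overlap supp M M') (auto simp: a_def a'_def)
  also have "\<dots> \<le> 1 - (\<Sum>i\<in>{1..p}.
      (1 - 2 * a * \<delta>) * integral {a..2 * a'} (\<lambda>c. softmax_prob p x c i) / a)"
    using softargmax_overlap_ge[OF p _ \<delta> shift M M'] a small
    unfolding a_def a'_def by (intro diff_left_mono sum_mono) auto
  also have "\<dots> = 1 - (1 - 2 * a * \<delta>) * (2 * a' - a) / a"
    using integral_sum_softmax_prob[OF p, of a "2 * a'" x] a
    by (simp add: sum_divide_distrib[symmetric] sum_distrib_left[symmetric])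
  finally show ?thesis .
qed

lemma Max_image_shift:
  fixes f g :: "'a \<Rightarrow> 'b::linordered_ab_group_add"
  assumes A: "finite A" "A \<noteq> {}" and shift: "\<forall>i\<in>A. f i \<le> g i \<and> g i \<le> f i + \<delta>"
  shows "Max (f ` A) \<le> Max (g ` A)" and "Max (g ` A) \<le> Max (f ` A) + \<delta>"
proof -
  have "Max (f ` A) \<in> f ` A" using A by (intro Max_in) auto
  then obtain i where "i \<in> A" "Max (f ` A) = f i" by auto
  then show "Max (f ` A) \<le> Max (g ` A)" using shift A by (metis Max_ge finite_imageI image_eqI order_trans)
  show "Max (g ` A) \<le> Max (f ` A) + \<delta>"
    using A shift by (auto intro!: Max.boundedI intro: order_trans add_right_mono Max_ge)
qed

lemma two_thirds_le_inverse_mult_ln: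
  assumes p: "p \<ge> 1" and \<epsilon>: "0 < \<epsilon>" "\<epsilon> \<le> 1"
  shows "2/3 \<le> inverse \<epsilon> * ln (2 * real p * inverse \<epsilon>)"
proof -
  have inv: "1 \<le> inverse \<epsilon>" using \<epsilon> by (simp add: one_le_inverse)
  moreover have "1 \<le> real p" using p by simp
  ultimately have "2 \<le> 2 * real p * inverse \<epsilon>" using mult_mono[of 1 "real p" 1 "inverse \<epsilon>"] by simp
  then have "ln 2 \<le> ln (2 * real p * inverse \<epsilon>)" by (subst ln_le_cancel_iff) linarith+
  then have "2/3 \<le> ln (2 * real p * inverse \<epsilon>)" using ln2_ge_two_thirds by linarith
  then show ?thesis using inv \<epsilon> mult_mono[of 1 "inverse \<epsilon>" "2/3" "ln (2 * real p * inverse \<epsilon>)"] by simp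
qed

lemma one_minus_overlap_factor_le:
  fixes L M M' \<delta> :: real
  assumes M: "0 < M" "M \<le> M'" "M' \<le> M + \<delta>" and \<delta>: "0 \<le> \<delta>"
    and L: "2/3 \<le> L" and small: "4 * L * \<delta> \<le> M"
  shows "1 - (1 - 4 * L * \<delta> / M) * (2 * M / M' - 1) \<le> 10 * L * \<delta> / M"
proof -
  have "2 - 2 * \<delta> / M \<le> 2 * M / (M + \<delta>)" using M \<delta> by (simp add: field_simps)
  also have "\<dots> \<le> 2 * M / M'" using M by (intro divide_left_mono) auto
  finally have "1 - (1 - 4 * L * \<delta> / M) * (2 * M / M' - 1)
      \<le> 1 - (1 - 4 * L * \<delta> / M) * (1 - 2 * \<delta> / M)"
    using M small by (intro diff_left_mono mult_left_mono) auto
  also have "\<dots> \<le> 10 * L * \<delta> / M"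
  proof -
    define u where "u = \<delta> / M"
    have u: "0 \<le> u" "0 \<le> L * u * u" "2 * u \<le> 6 * L * u"
      using M L \<delta> mult_right_mono[of "1/3" L u] by (simp_all add: u_def)
    have "1 - (1 - 4 * L * u) * (1 - 2 * u) = 4 * L * u + 2 * u - 8 * (L * u * u)"
      by (simp add: algebra_simps)
    then show ?thesis using u by (simp add: u_def)
  qed
  finally show ?thesis .
qed

lemma TV_softargmax_le:
  fixes p :: nat and \<epsilon> :: real and x x' :: "nat \<Rightarrow> real"
  defines "M \<equiv> Max (x ` {1..p})" and "L \<equiv> inverse \<epsilon> * ln (2 * real p * inverse \<epsilon>)"
  assumes p: "p \<ge> 1" and \<delta>: "\<delta> \<ge> 0"
    and shift: "\<forall>i\<in>{1..p}. x i \<le> x' i \<and> x' i \<le> x i + \<delta>"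
    and L: "2/3 \<le> L" and M: "0 < M" and small: "4 * L * \<delta> \<le> M"
  shows "TV (softargmax p \<epsilon> x) (softargmax p \<epsilon> x') \<le> 10 * L * \<delta> / M"
proof -
  define M' where "M' = Max (x' ` {1..p})"
  have M': "M \<le> M'" "M' \<le> M + \<delta>"
    using Max_image_shift[of "{1..p}" x x' \<delta>] p shift by (auto simp: M_def M'_def)
  moreover have "\<delta> \<le> 4 * L * \<delta>" using mult_right_mono[of 1 "4 * L" \<delta>] L \<delta> by simp
  ultimately have "M' \<le> 2 * M" using small by linarith
  have a: "sam_lo p \<epsilon> x = 2 * L / M" "sam_lo p \<epsilon> x' = 2 * L / M'"
    by (simp_all add: sam_lo_def L_def M_def M'_def mult.assoc)
  have Max_ne: "Max (x ` {1..p}) \<noteq> 0" "Max (x' ` {1..p}) \<noteq> 0"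
    using M M' by (auto simp: M_def M'_def)
  have "0 < 2 * L / M'" "2 * L / M' \<le> 2 * L / M" "2 * L / M \<le> 2 * (2 * L / M')"
    "2 * (2 * L / M) * \<delta> \<le> 1"
    using L M M' \<open>M' \<le> 2 * M\<close> small by (auto simp: field_simps intro: divide_left_mono)
  then have "TV (softargmax p \<epsilon> x) (softargmax p \<epsilon> x')
      \<le> 1 - (1 - 2 * (2 * L / M) * \<delta>) * (2 * (2 * L / M') - 2 * L / M) / (2 * L / M)"
    by (rule TV_softargmax_le_temperatures[OF p \<delta> shift Max_ne, where \<epsilon> = \<epsilon>, unfolded a])
  also have "\<dots> = 1 - (1 - 4 * L * \<delta> / M) * (2 * M / M' - 1)"
    using L M M' by (simp add: field_simps)
  also have "\<dots> \<le> 10 * L * \<delta> / M"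
    using one_minus_overlap_factor_le[OF M M' \<delta> L small] .
  finally show ?thesis .
qed

theorem mainTheorem9:
  fixes p :: nat and x x' :: "nat \<Rightarrow> real" and \<epsilon> \<delta> :: real
  assumes "p \<ge> 1"
    and "\<forall>i\<in>{1..p}. x i \<ge> 0"
    and "\<forall>i\<in>{1..p}. x' i \<ge> 0"
    and "0 < \<epsilon>" and "\<epsilon> \<le> 1"
    and "\<delta> > 0"
    and "\<delta> \<le> Max (x ` {1..p}) / (4 * inverse \<epsilon> * ln (2 * real p * inverse \<epsilon>))"
    and "\<forall>i\<in>{1..p}. x i \<le> x' i \<and> x' i \<le> x i + \<delta>"
  shows "TV (softargmax p \<epsilon> x) (softargmax p \<epsilon> x')
           \<le> 10 * inverse \<epsilon> * ln (2 * real p * inverse \<epsilon>) * \<delta> / Max (x ` {1..p})"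
proof -
  define L where "L = inverse \<epsilon> * ln (2 * real p * inverse \<epsilon>)"
  define M where "M = Max (x ` {1..p})"
  have L: "2/3 \<le> L" unfolding L_def using assms(1,4,5) by (rule two_thirds_le_inverse_mult_ln)
  have \<delta>: "\<delta> \<le> M / (4 * L)" using assms(7) by (simp add: M_def L_def mult.assoc)
  then have "0 < M / (4 * L)" using assms(6) by linarith
  then have M: "0 < M" using L by (simp add: zero_less_divide_iff)
  then have "4 * L * \<delta> \<le> M" using \<delta> L by (simp add: field_simps)
  then have "TV (softargmax p \<epsilon> x) (softargmax p \<epsilon> x') \<le> 10 * L * \<delta> / M"
    using TV_softargmax_le[OF assms(1) _ assms(8)] assms(6) L M by (simp add: L_def M_def)
  then show ?thesis by (simp add: L_def M_def mult.assoc)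
qed

end
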